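(* The vertical extension $(X^*,\mathcal L^*,d^* )$ of a reduced Birkhoff--Beatley system $(X,\mathcal L,d)$ is a reduced Birkhoff--Beatley system.
   Context: A reduced Birkhoff--Beatley system is a triple $(X,\mathcal L,d)$ where $X$ is a set with at least two elements (points), $\mathcal L$ is a family of subsets of $X$ (lines), and $d\colon X^2\to\mathbb R$ is a function (metric), such that: (i) any two distinct points of $X$ lie in a unique line of $\mathcal L$; (ii) for each $\ell\in\mathcal L$ there is a bijection $c\colon\mathbb R\to\ell$ (a ruler) with $d(c(t),c(s))=|t-s|$ for all $s,t$. The vertical extension of $(X,\mathcal L,d)$ is $(X^*,\mathcal L^*,d^* )$ where $X^*=X\times\mathbb R$, $d^*((x_0,y_0),(x_1,y_1))=\sqrt{d(x_0,x_1)^2+(y_0-y_1)^2}$, and $\mathcal L^*$ consists of the following lines, one for each pair of distinct points $(x_0,y_0)\ne(x_1,y_1)$ of $X^*$: if $x_0\neq x_1$, let $\ell\in\mathcal L$ be the line through $x_0,x_1$, $c\colon\mathbb R\to\ell$ a ruler with $c(s_0)=x_0$, $c(s_1)=x_1$, $a:=((s_0-s_1)^2+(y_0-y_1)^2)^{-1/2}$, and the line is $\{c^*(t)\mid t\in\mathbb R\}$ with $c^*(t)=\bigl(c(at(s_1-s_0)+s_0),\,at(y_1-y_0)+y_0\bigr)$; if $x_0=x_1$ (so $y_0\neq y_1$), the line is $\{x_0\}\times\mathbb R$. *)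

theory Defs
  imports Main "HOL-Analysis.Analysis"
begin

definition is_ruler :: "('a \<Rightarrow> 'a \<Rightarrow> real) \<Rightarrow> 'a set \<Rightarrow> (real \<Rightarrow> 'a) \<Rightarrow> bool" where
  "is_ruler d l c \<longleftrightarrow> bij_betw c UNIV l \<and> (\<forall>s t. d (c t) (c s) = \<bar>t - s\<bar>)"

definition reduced_BB_system :: "'a set \<Rightarrow> 'a set set \<Rightarrow> ('a \<Rightarrow> 'a \<Rightarrow> real) \<Rightarrow> bool" where
  "reduced_BB_system X L d \<longleftrightarrow>
     (\<exists>x\<in>X. \<exists>y\<in>X. x \<noteq> y) \<and>
     (\<forall>l\<in>L. l \<subseteq> X) \<and>
     (\<forall>x\<in>X. \<forall>y\<in>X. x \<noteq> y \<longrightarrow> (\<exists>!l. l \<in> L \<and> x \<in> l \<and> y \<in> l)) \<and>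
     (\<forall>l\<in>L. \<exists>c. is_ruler d l c)"

definition vext_points :: "'a set \<Rightarrow> ('a \<times> real) set" where
  "vext_points X = X \<times> (UNIV :: real set)"

definition vext_metric :: "('a \<Rightarrow> 'a \<Rightarrow> real) \<Rightarrow> ('a \<times> real) \<Rightarrow> ('a \<times> real) \<Rightarrow> real" where
  "vext_metric d p q = sqrt ((d (fst p) (fst q))\<^sup>2 + (snd p - snd q)\<^sup>2)"

definition vext_lines :: "'a set \<Rightarrow> 'a set set \<Rightarrow> ('a \<Rightarrow> 'a \<Rightarrow> real) \<Rightarrow> ('a \<times> real) set set" where
  "vext_lines X L d = {m. \<exists>x0 y0 x1 y1. x0 \<in> X \<and> x1 \<in> X \<and> (x0, y0) \<noteq> (x1, y1) \<and>
     (if x0 \<noteq> x1 then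
        (\<exists>l c s0 s1. l \<in> L \<and> x0 \<in> l \<and> x1 \<in> l \<and> is_ruler d l c \<and> c s0 = x0 \<and> c s1 = x1 \<and>
           (let a = 1 / sqrt ((s0 - s1)\<^sup>2 + (y0 - y1)\<^sup>2) in
             m = range (\<lambda>t. (c (a * t * (s1 - s0) + s0), a * t * (y1 - y0) + y0))))
      else m = {x0} \<times> (UNIV :: real set))}"

end

theory Submission
  imports Defs
begin

text \<open>A non-vertical line of the vertical extension is the graph of an affine function
  \<open>s \<mapsto> \<alpha> s + \<beta>\<close> over a ruler \<open>c\<close> of a line of \<open>X\<close>; rescaling the parameter by
  \<open>1 / sqrt (1 + \<alpha>\<^sup>2)\<close> turns it into a ruler for \<open>d\<^sup>*\<close>. For uniqueness, two rulers of the same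
  line differ by an isometry of \<open>\<real>\<close>, which is affine, so all graphs over one line of \<open>X\<close> can
  be written over a common ruler; there an affine function is determined by its values at two
  distinct parameters.\<close>

lemma range_comp_affine:
  fixes A :: real
  assumes "A \<noteq> 0"
  shows "range (\<lambda>t. g (A * t + B)) = range g"
proof -
  have "range (\<lambda>t. A * t + B) = UNIV"
  proof (intro surjI)
    show "A * ((u - B) / A) + B = u" for u using assms by simp
  qed
  then show ?thesis by (metis image_image)
qed

lemma isometry_from_real_inj:
  fixes D :: "'b \<Rightarrow> 'b \<Rightarrow> real"
  assumes "\<forall>s t. D (f t) (f s) = \<bar>t - s\<bar>"
  shows "inj f"
proof (rule injI)
  fix t s assume "f t = f s"
  then have "\<bar>t - s\<bar> = D (f t) (f t)" using assms by metis
  also have "\<dots> = 0" using assms by simp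
  finally show "t = s" by simp
qed

lemma is_ruler_inj: "is_ruler d l c \<Longrightarrow> inj c"
  unfolding is_ruler_def by (blast intro: isometry_from_real_inj)

lemma is_ruler_range: "is_ruler d l c \<Longrightarrow> range c = l"
  unfolding is_ruler_def by (simp add: bij_betw_def)

lemma reduced_BB_line_subset: "reduced_BB_system X L d \<Longrightarrow> l \<in> L \<Longrightarrow> l \<subseteq> X"
  unfolding reduced_BB_system_def by blast

lemma reduced_BB_has_ruler:
  assumes "reduced_BB_system X L d" "l \<in> L"
  obtains c where "is_ruler d l c"
  using assms unfolding reduced_BB_system_def by blast

lemma reduced_BB_line_through:
  assumes "reduced_BB_system X L d" "x \<in> X" "y \<in> X" "x \<noteq> y"
  obtains l where "l \<in> L" "x \<in> l" "y \<in> l"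
  using assms unfolding reduced_BB_system_def by blast

lemma reduced_BB_line_unique:
  assumes "reduced_BB_system X L d" "x \<noteq> y"
    and "l \<in> L" "x \<in> l" "y \<in> l" "l' \<in> L" "x \<in> l'" "y \<in> l'"
  shows "l = l'"
proof -
  have "x \<in> X" "y \<in> X" using assms reduced_BB_line_subset by blast+
  then show ?thesis using assms unfolding reduced_BB_system_def by blast
qed

lemma reduced_BB_dist_self:
  assumes BB: "reduced_BB_system X L d" and "x \<in> X"
  shows "d x x = 0"
proof -
  obtain a b where "a \<in> X" "b \<in> X" "a \<noteq> b"
    using BB unfolding reduced_BB_system_def by blast
  then obtain y where "y \<in> X" "y \<noteq> x" by (cases "a = x") auto
  then obtain l where "l \<in> L" "x \<in> l"
    using reduced_BB_line_through[OF BB \<open>x \<in> X\<close>] by metis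
  moreover obtain c where "is_ruler d l c" using BB \<open>l \<in> L\<close> by (rule reduced_BB_has_ruler)
  moreover from calculation obtain t where "x = c t" using is_ruler_range by blast
  ultimately show ?thesis unfolding is_ruler_def by simp
qed

lemma real_isometry_affine:
  fixes \<phi> :: "real \<Rightarrow> real"
  assumes iso: "\<And>s t. \<bar>\<phi> t - \<phi> s\<bar> = \<bar>t - s\<bar>"
  obtains \<sigma> b where "\<sigma>\<^sup>2 = 1" "\<And>t. \<phi> t = \<sigma> * t + b"
proof
  define b where "b = \<phi> 0"
  define \<sigma> where "\<sigma> = \<phi> 1 - b"
  have sq: "(\<phi> t - b)\<^sup>2 = t\<^sup>2" for t
    using iso[of t 0] unfolding b_def by (metis diff_zero power2_abs)
  show \<sigma>: "\<sigma>\<^sup>2 = 1" using sq[of 1] unfolding \<sigma>_def by simp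
  fix t
  have "((\<phi> t - b) - \<sigma>)\<^sup>2 = (t - 1)\<^sup>2"
    using iso[of t 1] unfolding \<sigma>_def by (metis diff_diff_eq2 diff_add_cancel power2_abs)
  then have "(\<phi> t - b)\<^sup>2 - 2 * (\<phi> t - b) * \<sigma> + \<sigma>\<^sup>2 = t\<^sup>2 - 2 * t + 1"
    by (simp add: power2_diff)
  then have "(\<phi> t - b) * \<sigma> = t"
    using sq[of t] \<sigma> by (simp add: algebra_simps)
  then have "(\<phi> t - b) * \<sigma>\<^sup>2 = t * \<sigma>" by (metis mult.assoc power2_eq_square)
  then show "\<phi> t = \<sigma> * t + b" using \<sigma> by (simp add: algebra_simps)
qed

lemma rulers_same_line:
  assumes r1: "is_ruler d l c1" and r2: "is_ruler d l c2"
  obtains \<sigma> b where "\<sigma>\<^sup>2 = 1" "\<And>t. c2 t = c1 (\<sigma> * t + b)"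
proof -
  define \<phi> where "\<phi> t = inv_into UNIV c1 (c2 t)" for t
  have c1_\<phi>: "c1 (\<phi> t) = c2 t" for t
  proof -
    have "c2 t \<in> range c1" using is_ruler_range[OF r1] is_ruler_range[OF r2] by auto
    then show ?thesis unfolding \<phi>_def by (rule f_inv_into_f)
  qed
  have iso: "\<bar>\<phi> t - \<phi> s\<bar> = \<bar>t - s\<bar>" for t s
  proof -
    have "\<bar>\<phi> t - \<phi> s\<bar> = d (c1 (\<phi> t)) (c1 (\<phi> s))" using r1 unfolding is_ruler_def by simp
    also have "\<dots> = d (c2 t) (c2 s)" by (simp only: c1_\<phi>)
    also have "\<dots> = \<bar>t - s\<bar>" using r2 unfolding is_ruler_def by simp
    finally show ?thesis .
  qed
  obtain \<sigma> b where \<sigma>: "\<sigma>\<^sup>2 = 1" and \<phi>: "\<And>t. \<phi> t = \<sigma> * t + b"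
    using real_isometry_affine[OF iso] by blast
  show thesis
  proof (rule that[OF \<sigma>])
    show "c2 t = c1 (\<sigma> * t + b)" for t using c1_\<phi>[of t] \<phi>[of t] by simp
  qed
qed

definition ruler_graph :: "(real \<Rightarrow> 'a) \<Rightarrow> real \<Rightarrow> real \<Rightarrow> ('a \<times> real) set" where
  "ruler_graph c \<alpha> \<beta> = range (\<lambda>s. (c s, \<alpha> * s + \<beta>))"

lemma ruler_graph_reparam:
  fixes \<sigma> :: real
  assumes \<sigma>: "\<sigma>\<^sup>2 = 1" and c2: "\<And>t. c2 t = c1 (\<sigma> * t + b)"
  shows "ruler_graph c2 \<alpha> \<beta> = ruler_graph c1 (\<alpha> * \<sigma>) (\<beta> - \<alpha> * \<sigma> * b)"
proof -
  define g where "g = (\<lambda>u. (c1 u, \<alpha> * \<sigma> * u + (\<beta> - \<alpha> * \<sigma> * b)))"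
  have "\<alpha> * \<sigma> * (\<sigma> * s + b) + (\<beta> - \<alpha> * \<sigma> * b) = \<alpha> * \<sigma>\<^sup>2 * s + \<beta>" for s
    by (simp add: algebra_simps power2_eq_square)
  then have "\<alpha> * \<sigma> * (\<sigma> * s + b) + (\<beta> - \<alpha> * \<sigma> * b) = \<alpha> * s + \<beta>" for s
    using \<sigma> by simp
  then have "(c2 s, \<alpha> * s + \<beta>) = g (\<sigma> * s + b)" for s unfolding g_def c2 by simp
  then have "ruler_graph c2 \<alpha> \<beta> = range (\<lambda>s. g (\<sigma> * s + b))"
    unfolding ruler_graph_def by (simp only:)
  also have "\<dots> = range g" using \<sigma> by (intro range_comp_affine) auto
  finally show ?thesis unfolding g_def ruler_graph_def .
qed

lemma ruler_graph_fst_inj: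
  assumes "inj c" "p \<in> ruler_graph c \<alpha> \<beta>" "q \<in> ruler_graph c \<alpha> \<beta>" "fst p = fst q"
  shows "p = q"
  using assms unfolding ruler_graph_def by (auto dest: injD)

lemma ruler_graph_eqI:
  assumes "inj c" "fst p \<noteq> fst q"
    and "p \<in> ruler_graph c \<alpha> \<beta>" "q \<in> ruler_graph c \<alpha> \<beta>"
    and "p \<in> ruler_graph c \<alpha>' \<beta>'" "q \<in> ruler_graph c \<alpha>' \<beta>'"
  shows "ruler_graph c \<alpha> \<beta> = ruler_graph c \<alpha>' \<beta>'"
proof -
  obtain u v where u: "p = (c u, \<alpha> * u + \<beta>)" and v: "q = (c v, \<alpha> * v + \<beta>)"
    using assms(3,4) unfolding ruler_graph_def by auto
  obtain u' v' where u': "p = (c u', \<alpha>' * u' + \<beta>')" and v': "q = (c v', \<alpha>' * v' + \<beta>')"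
    using assms(5,6) unfolding ruler_graph_def by auto
  have "u' = u" "v' = v" using u u' v v' assms(1) by (auto dest: injD)
  have "u \<noteq> v" using u v assms(2) by auto
  have eu: "\<alpha> * u + \<beta> = \<alpha>' * u + \<beta>'" and "\<alpha> * v + \<beta> = \<alpha>' * v + \<beta>'"
    using u u' v v' \<open>u' = u\<close> \<open>v' = v\<close> by simp_all
  then have "(\<alpha> - \<alpha>') * (u - v) = 0" by (simp add: algebra_simps)
  then have "\<alpha> = \<alpha>'" using \<open>u \<noteq> v\<close> by simp
  with eu show ?thesis by simp
qed

lemma is_ruler_ruler_graph:
  fixes \<alpha> \<beta> :: real
  assumes r: "is_ruler d l c"
  defines "k \<equiv> 1 / sqrt (1 + \<alpha>\<^sup>2)"
  shows "is_ruler (vext_metric d) (ruler_graph c \<alpha> \<beta>) (\<lambda>t. (c (k * t), \<alpha> * (k * t) + \<beta>))"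
proof -
  have "sqrt (1 + \<alpha>\<^sup>2) > 0" by (simp add: add_pos_nonneg)
  then have k: "k > 0" "k * sqrt (1 + \<alpha>\<^sup>2) = 1" unfolding k_def by simp_all
  have dist: "vext_metric d (c (k * t), \<alpha> * (k * t) + \<beta>) (c (k * s), \<alpha> * (k * s) + \<beta>) = \<bar>t - s\<bar>"
    for s t
  proof -
    have "d (c (k * t)) (c (k * s)) = \<bar>k * t - k * s\<bar>" using r unfolding is_ruler_def by simp
    then have "vext_metric d (c (k * t), \<alpha> * (k * t) + \<beta>) (c (k * s), \<alpha> * (k * s) + \<beta>)
        = sqrt ((k * (t - s))\<^sup>2 * (1 + \<alpha>\<^sup>2))"
      unfolding vext_metric_def by (simp add: algebra_simps power2_eq_square)
    also have "\<dots> = \<bar>t - s\<bar> * (k * sqrt (1 + \<alpha>\<^sup>2))"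
      using k by (simp add: real_sqrt_mult abs_mult)
    finally show ?thesis using k by simp
  qed
  then have "inj (\<lambda>t. (c (k * t), \<alpha> * (k * t) + \<beta>))"
    by (blast intro: isometry_from_real_inj)
  moreover have "range (\<lambda>t. (c (k * t), \<alpha> * (k * t) + \<beta>)) = ruler_graph c \<alpha> \<beta>"
    unfolding ruler_graph_def
    using range_comp_affine[where g = "\<lambda>s. (c s, \<alpha> * s + \<beta>)" and A = k and B = 0] k by simp
  ultimately show ?thesis unfolding is_ruler_def bij_betw_def using dist by simp
qed

lemma vext_segment_eq_ruler_graph:
  fixes c :: "real \<Rightarrow> 'a" and s0 s1 y0 y1 a :: real
  assumes "s0 \<noteq> s1" "a \<noteq> 0"
  defines "\<alpha> \<equiv> (y1 - y0) / (s1 - s0)"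
  shows "range (\<lambda>t. (c (a * t * (s1 - s0) + s0), a * t * (y1 - y0) + y0))
       = ruler_graph c \<alpha> (y0 - \<alpha> * s0)"
proof -
  define g where "g = (\<lambda>s. (c s, \<alpha> * s + (y0 - \<alpha> * s0)))"
  have slope: "y1 - y0 = \<alpha> * (s1 - s0)" unfolding \<alpha>_def using assms(1) by simp
  have "(c (a * t * (s1 - s0) + s0), a * t * (y1 - y0) + y0) = g (a * (s1 - s0) * t + s0)" for t
    unfolding g_def slope by (simp add: algebra_simps)
  then have "range (\<lambda>t. (c (a * t * (s1 - s0) + s0), a * t * (y1 - y0) + y0))
      = range (\<lambda>t. g (a * (s1 - s0) * t + s0))" by (simp only:)
  also have "\<dots> = range g" using assms by (simp add: range_comp_affine)
  finally show ?thesis unfolding g_def ruler_graph_def .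
qed

lemma vext_lines_cases:
  assumes "m \<in> vext_lines X L d"
  obtains (vertical) x where "x \<in> X" "m = {x} \<times> UNIV"
    | (graph) l c \<alpha> \<beta> where "l \<in> L" "is_ruler d l c" "m = ruler_graph c \<alpha> \<beta>"
proof -
  obtain x0 y0 x1 y1 where "x0 \<in> X" and H: "if x0 \<noteq> x1 then
        (\<exists>l c s0 s1. l \<in> L \<and> x0 \<in> l \<and> x1 \<in> l \<and> is_ruler d l c \<and> c s0 = x0 \<and> c s1 = x1 \<and>
           (let a = 1 / sqrt ((s0 - s1)\<^sup>2 + (y0 - y1)\<^sup>2) in
             m = range (\<lambda>t. (c (a * t * (s1 - s0) + s0), a * t * (y1 - y0) + y0))))
      else m = {x0} \<times> UNIV"
    using assms unfolding vext_lines_def by blast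
  show thesis
  proof (cases "x0 = x1")
    case True
    then show thesis using H \<open>x0 \<in> X\<close> vertical by simp
  next
    case False
    obtain l c s0 s1 where l: "l \<in> L" and c: "is_ruler d l c" and "c s0 = x0" "c s1 = x1"
      and m: "let a = 1 / sqrt ((s0 - s1)\<^sup>2 + (y0 - y1)\<^sup>2) in
               m = range (\<lambda>t. (c (a * t * (s1 - s0) + s0), a * t * (y1 - y0) + y0))"
      using H by (simp only: if_P[OF False]) blast
    define a where "a = 1 / sqrt ((s0 - s1)\<^sup>2 + (y0 - y1)\<^sup>2)"
    have "s0 \<noteq> s1" using False \<open>c s0 = x0\<close> \<open>c s1 = x1\<close> by auto
    moreover from this have "a \<noteq> 0" unfolding a_def by simp
    moreover have "m = range (\<lambda>t. (c (a * t * (s1 - s0) + s0), a * t * (y1 - y0) + y0))"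
      using m unfolding Let_def a_def .
    ultimately have "m = ruler_graph c ((y1 - y0) / (s1 - s0)) (y0 - (y1 - y0) / (s1 - s0) * s0)"
      using vext_segment_eq_ruler_graph by simp
    with l c show thesis by (rule graph)
  qed
qed

lemma vext_lines_subset:
  assumes BB: "reduced_BB_system X L d" and "m \<in> vext_lines X L d"
  shows "m \<subseteq> vext_points X"
  using assms(2)
proof (cases rule: vext_lines_cases)
  case (graph l c \<alpha> \<beta>)
  then have "range c \<subseteq> X" using reduced_BB_line_subset[OF BB] is_ruler_range by blast
  then show ?thesis using graph unfolding ruler_graph_def vext_points_def by auto
qed (auto simp: vext_points_def)

lemma vext_lines_have_ruler:
  assumes BB: "reduced_BB_system X L d" and "m \<in> vext_lines X L d"
  shows "\<exists>c. is_ruler (vext_metric d) m c"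
  using assms(2)
proof (cases rule: vext_lines_cases)
  case (vertical x)
  then have "is_ruler (vext_metric d) m (\<lambda>t. (x, t))"
    using reduced_BB_dist_self[OF BB]
    unfolding is_ruler_def vext_metric_def bij_betw_def by (auto simp: inj_on_def)
  then show ?thesis by blast
next
  case (graph l c \<alpha> \<beta>)
  then show ?thesis using is_ruler_ruler_graph by blast
qed

lemma vext_line_through:
  assumes BB: "reduced_BB_system X L d"
    and p: "(x0, y0) \<in> vext_points X" and q: "(x1, y1) \<in> vext_points X"
    and pq: "(x0, y0) \<noteq> (x1, y1)"
  shows "\<exists>m \<in> vext_lines X L d. (x0, y0) \<in> m \<and> (x1, y1) \<in> m"
proof -
  have X: "x0 \<in> X" "x1 \<in> X" using p q unfolding vext_points_def by auto
  have vext_linesI: "m \<in> vext_lines X L d"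
    if "if x0 \<noteq> x1 then
        (\<exists>l c s0 s1. l \<in> L \<and> x0 \<in> l \<and> x1 \<in> l \<and> is_ruler d l c \<and> c s0 = x0 \<and> c s1 = x1 \<and>
           (let a = 1 / sqrt ((s0 - s1)\<^sup>2 + (y0 - y1)\<^sup>2) in
             m = range (\<lambda>t. (c (a * t * (s1 - s0) + s0), a * t * (y1 - y0) + y0))))
      else m = {x0} \<times> UNIV" for m
    unfolding vext_lines_def mem_Collect_eq
    by (intro exI[of _ x0] exI[of _ y0] exI[of _ x1] exI[of _ y1] conjI X pq that)
  show ?thesis
  proof (cases "x0 = x1")
    case True
    then have "{x0} \<times> UNIV \<in> vext_lines X L d" by (intro vext_linesI) simp
    then show ?thesis using True by (intro bexI[of _ "{x0} \<times> UNIV"]) auto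
  next
    case False
    obtain l where l: "l \<in> L" "x0 \<in> l" "x1 \<in> l"
      using reduced_BB_line_through[OF BB X False] .
    obtain c where c: "is_ruler d l c" using BB \<open>l \<in> L\<close> by (rule reduced_BB_has_ruler)
    then obtain s0 s1 where s: "c s0 = x0" "c s1 = x1" using l is_ruler_range by blast
    define a where "a = 1 / sqrt ((s0 - s1)\<^sup>2 + (y0 - y1)\<^sup>2)"
    define m where "m = range (\<lambda>t. (c (a * t * (s1 - s0) + s0), a * t * (y1 - y0) + y0))"
    have "m \<in> vext_lines X L d"
    proof (rule vext_linesI, simp only: if_P[OF False])
      show "\<exists>l c s0 s1. l \<in> L \<and> x0 \<in> l \<and> x1 \<in> l \<and> is_ruler d l c \<and> c s0 = x0 \<and> c s1 = x1 \<and>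
           (let a = 1 / sqrt ((s0 - s1)\<^sup>2 + (y0 - y1)\<^sup>2) in
             m = range (\<lambda>t. (c (a * t * (s1 - s0) + s0), a * t * (y1 - y0) + y0)))"
        using l c s unfolding Let_def a_def m_def by blast
    qed
    moreover have "(x0, y0) \<in> m" unfolding m_def using s by (intro range_eqI[where x = 0]) simp
    moreover have "s0 \<noteq> s1" using s False by auto
    then have "a \<noteq> 0" unfolding a_def by simp
    then have "(x1, y1) \<in> m" unfolding m_def using s by (intro range_eqI[where x = "1 / a"]) simp
    ultimately show ?thesis by blast
  qed
qed

lemma vext_line_vertical:
  assumes "m \<in> vext_lines X L d" "p \<in> m" "q \<in> m" "p \<noteq> q" "fst p = fst q"
  shows "m = {fst p} \<times> UNIV"
  using assms(1)
proof (cases rule: vext_lines_cases)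
  case (graph l c \<alpha> \<beta>)
  then have "p = q" using assms(2-5) ruler_graph_fst_inj is_ruler_inj by blast
  with assms(4) show ?thesis by simp
qed (use assms in auto)

lemma vext_line_graph_over_ruler:
  assumes BB: "reduced_BB_system X L d"
    and m: "m \<in> vext_lines X L d" "p \<in> m" "q \<in> m" and pq: "fst p \<noteq> fst q"
    and l: "l \<in> L" "fst p \<in> l" "fst q \<in> l" and c: "is_ruler d l c"
  obtains \<alpha> \<beta> where "m = ruler_graph c \<alpha> \<beta>"
  using m(1)
proof (cases rule: vext_lines_cases)
  case (vertical x)
  then show thesis using m pq by auto
next
  case (graph l' c' \<alpha> \<beta>)
  have "fst p \<in> l'" "fst q \<in> l'"
    using graph m is_ruler_range[OF graph(2)] unfolding ruler_graph_def by auto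
  then have "l' = l" using reduced_BB_line_unique[OF BB pq] graph(1) l by blast
  then obtain \<sigma> b where "\<sigma>\<^sup>2 = 1" "\<And>t. c' t = c (\<sigma> * t + b)"
    using rulers_same_line[OF c] graph(2) by blast
  then have "m = ruler_graph c (\<alpha> * \<sigma>) (\<beta> - \<alpha> * \<sigma> * b)"
    using graph(3) ruler_graph_reparam by blast
  then show thesis by (rule that)
qed

lemma vext_line_unique:
  assumes BB: "reduced_BB_system X L d"
    and pX: "p \<in> vext_points X" and qX: "q \<in> vext_points X" and pq: "p \<noteq> q"
    and m1: "m1 \<in> vext_lines X L d" "p \<in> m1" "q \<in> m1"
    and m2: "m2 \<in> vext_lines X L d" "p \<in> m2" "q \<in> m2"
  shows "m1 = m2"
proof (cases "fst p = fst q")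
  case True
  then show ?thesis using vext_line_vertical m1 m2 pq by metis
next
  case False
  have "fst p \<in> X" "fst q \<in> X" using pX qX unfolding vext_points_def by auto
  then obtain l where l: "l \<in> L" "fst p \<in> l" "fst q \<in> l"
    using reduced_BB_line_through[OF BB _ _ False] by blast
  obtain c where c: "is_ruler d l c" using BB \<open>l \<in> L\<close> by (rule reduced_BB_has_ruler)
  obtain \<alpha>1 \<beta>1 where "m1 = ruler_graph c \<alpha>1 \<beta>1"
    using vext_line_graph_over_ruler[OF BB m1 False l c] .
  moreover obtain \<alpha>2 \<beta>2 where "m2 = ruler_graph c \<alpha>2 \<beta>2"
    using vext_line_graph_over_ruler[OF BB m2 False l c] .
  ultimately show ?thesis using ruler_graph_eqI[OF is_ruler_inj[OF c] False] m1 m2 by simp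
qed

theorem lemma3:
  fixes X :: "'a set" and L :: "'a set set" and d :: "'a \<Rightarrow> 'a \<Rightarrow> real"
  assumes "reduced_BB_system X L d"
  shows "reduced_BB_system (vext_points X) (vext_lines X L d) (vext_metric d)"
proof -
  obtain x where "x \<in> X" using assms unfolding reduced_BB_system_def by blast
  then have "(x, 0) \<in> vext_points X" "(x, 1) \<in> vext_points X" unfolding vext_points_def by auto
  then have two_points: "\<exists>p\<in>vext_points X. \<exists>q\<in>vext_points X. p \<noteq> q" by fastforce
  have unique_line: "\<exists>!m. m \<in> vext_lines X L d \<and> p \<in> m \<and> q \<in> m"
    if pq: "p \<in> vext_points X" "q \<in> vext_points X" "p \<noteq> q" for p q
  proof -
    obtain m where "m \<in> vext_lines X L d" "p \<in> m" "q \<in> m"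
      using vext_line_through[OF assms, of "fst p" "snd p" "fst q" "snd q"] pq by auto
    then show ?thesis using vext_line_unique[OF assms pq] by blast
  qed
  show ?thesis
    unfolding reduced_BB_system_def
  proof (intro conjI ballI impI)
    show "m \<subseteq> vext_points X" "\<exists>c. is_ruler (vext_metric d) m c"
      if "m \<in> vext_lines X L d" for m
      using that vext_lines_subset[OF assms] vext_lines_have_ruler[OF assms] by blast+
  qed (use two_points unique_line in blast)+
qed

end
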